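(* Let $\|\cdot\|$ be a URTC-norm on $\mathbb{R}^2$, and let $\phi\colon\mathbb{R}^2\to\mathbb{R}^2$ be an arbitrary map such that for all $x,y\in\mathbb{R}^2$, $\|x-y\|=1$ implies $\|\phi(x)-\phi(y)\|=1$. Then $\phi$ is an affine isometry (with respect to $\|\cdot\|$).
   Context: A norm $\|\cdot\|$ on $\mathbb{R}^2$ is called a URTC-norm (unique regular triangle constructibility) if for every $a,b\in\mathbb{R}^2$ with $\|a-b\|=1$ the system $\|a-x\|=1$, $\|b-x\|=1$ is satisfied by exactly two points $x\in\mathbb{R}^2$. *)

theory Defs
  imports "HOL-Analysis.Analysis"
begin

definition is_norm :: "(real^2 \<Rightarrow> real) \<Rightarrow> bool" where
  "is_norm N \<longleftrightarrow>
     (\<forall>x. 0 \<le> N x) \<and> (\<forall>x. N x = 0 \<longleftrightarrow> x = 0) \<and>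
     (\<forall>c x. N (c *\<^sub>R x) = \<bar>c\<bar> * N x) \<and>
     (\<forall>x y. N (x + y) \<le> N x + N y)"

definition urtc_norm :: "(real^2 \<Rightarrow> real) \<Rightarrow> bool" where
  "urtc_norm N \<longleftrightarrow> is_norm N \<and>
     (\<forall>a b. N (a - b) = 1 \<longrightarrow>
        finite {x. N (a - x) = 1 \<and> N (b - x) = 1} \<and>
        card {x. N (a - x) = 1 \<and> N (b - x) = 1} = 2)"

definition affine_isometry :: "(real^2 \<Rightarrow> real) \<Rightarrow> (real^2 \<Rightarrow> real^2) \<Rightarrow> bool" where
  "affine_isometry N \<phi> \<longleftrightarrow>
     (\<exists>L c. linear L \<and> (\<forall>x. \<phi> x = L x + c)) \<and>
     (\<forall>x y. N (\<phi> x - \<phi> y) = N (x - y))"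

end

theory Submission
  imports Defs
begin

text \<open>Under the URTC hypothesis the apex of a unit triangle over a unit segment is unique up to
  reflection through the midpoint of the segment. Hence a map \<open>f\<close> preserving unit distance
  sends each rhombus \<open>p, p + a, p + b, p + a + b\<close> made of two unit triangles either to a
  rhombus or collapses \<open>p + a + b\<close> onto \<open>p\<close>. The collapse is ruled out by a connectedness
  argument on the set of oriented unit triangles, which is homeomorphic to the unit circle of the
  norm. Gluing rhombi shows that \<open>f\<close> is affine along every line in a unit direction. Points
  equidistant from two given ones (intermediate value theorem) give a coarse Lipschitz bound for
  \<open>f\<close>, which forces the increment along a unit vector to be independent of the base point. So
  \<open>f (x + w) = f x + L w\<close> with \<open>L\<close> additive and coarsely bounded, hence linear; and \<open>L\<close> maps
  the unit circle into itself, hence is an isometry.\<close>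

lemma le_of_forall_nat_mult_le:
  fixes a b D :: real
  assumes "\<And>n::nat. real n * a \<le> real n * b + D"
  shows "a \<le> b"
proof (rule ccontr)
  assume "\<not> a \<le> b"
  then have pos: "a - b > 0" by simp
  obtain n :: nat where "D / (a - b) < real n" using reals_Archimedean2 by blast
  then have "D < real n * (a - b)" using pos by (simp add: field_simps)
  with assms[of n] show False by (simp add: algebra_simps)
qed

lemma arithmetic_progression_of_second_difference:
  fixes x :: "nat \<Rightarrow> 'a::real_vector"
  assumes "\<And>n. x (Suc (Suc n)) = 2 *\<^sub>R x (Suc n) - x n"
  shows "x n = x 0 + real n *\<^sub>R (x 1 - x 0)"
proof (induction n rule: induct_nat_012)
  case (ge2 n)
  have "x (Suc (Suc n)) = 2 *\<^sub>R x (Suc n) - x n" by (rule assms)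
  also have "\<dots> = 2 *\<^sub>R (x 0 + real (Suc n) *\<^sub>R (x 1 - x 0)) - (x 0 + real n *\<^sub>R (x 1 - x 0))"
    by (simp only: ge2)
  also have "\<dots> = x 0 + real (Suc (Suc n)) *\<^sub>R (x 1 - x 0)"
    by (simp add: scaleR_2 scaleR_add_left)
  finally show ?case .
qed simp_all

lemma additive_scaleR_rat:
  fixes G :: "'a::real_vector \<Rightarrow> 'b::real_vector"
  assumes add: "\<And>x y. G (x + y) = G x + G y" and "q \<in> \<rat>"
  shows "G (q *\<^sub>R x) = q *\<^sub>R G x"
proof -
  interpret additive G by unfold_locales (rule add)
  have nat: "G (real n *\<^sub>R x) = real n *\<^sub>R G x" for n x
    by (induction n) (simp_all add: zero add algebra_simps)
  have int: "G (real_of_int k *\<^sub>R x) = real_of_int k *\<^sub>R G x" for k x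
    by (cases k rule: int_cases2) (simp_all add: nat minus)
  obtain a b where ab: "b > 0" "q = of_int a / of_int b" using \<open>q \<in> \<rat>\<close> by (rule Rats_cases')
  have "real_of_int b *\<^sub>R G (q *\<^sub>R x) = G (real_of_int a *\<^sub>R x)"
    using int[of b "q *\<^sub>R x"] ab by simp
  also have "\<dots> = real_of_int b *\<^sub>R (q *\<^sub>R G x)"
    using int[of a x] ab by simp
  finally show ?thesis using ab(1) by (simp flip: scaleR_scaleR)
qed

text \<open>Homogeneity over \<open>\<rat>\<close> gives the linear bound \<open>\<bar>C\<bar> * norm x\<close>, which in turn
  makes \<open>G\<close> continuous along lines through the origin.\<close>
lemma additive_coarsely_bounded_imp_linear:
  fixes G :: "'a::real_normed_vector \<Rightarrow> 'b::real_normed_vector"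
  assumes add: "\<And>x y. G (x + y) = G x + G y" and coarse: "\<And>x. norm (G x) \<le> C * norm x + D"
  shows "linear G"
proof -
  note rat = additive_scaleR_rat[of G, OF add]
  have bound: "norm (G x) \<le> \<bar>C\<bar> * norm x" for x
  proof (rule le_of_forall_nat_mult_le)
    fix n :: nat
    have "real n * norm (G x) = norm (G (real n *\<^sub>R x))" by (simp add: rat)
    also have "\<dots> \<le> C * (real n * norm x) + D" using coarse[of "real n *\<^sub>R x"] by simp
    also have "\<dots> \<le> real n * (\<bar>C\<bar> * norm x) + D"
      by (simp add: mult_right_mono mult.left_commute)
    finally show "real n * norm (G x) \<le> real n * (\<bar>C\<bar> * norm x) + D" .
  qed
  have "G (t *\<^sub>R x) = t *\<^sub>R G x" for t x
  proof -
    define K where "K = \<bar>C\<bar> * norm x + norm (G x) + 1"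
    have K: "K > 0" unfolding K_def by (simp add: add_nonneg_pos)
    have "norm (G (t *\<^sub>R x) - t *\<^sub>R G x) \<le> e" if "e > 0" for e
    proof -
      obtain q where q: "q \<in> \<rat>" "\<bar>t - q\<bar> < e / K"
        using Rats_dense_in_real[of "t - e / K" "t + e / K"] \<open>e > 0\<close> K by auto
      have "G (t *\<^sub>R x) = G ((t - q) *\<^sub>R x) + q *\<^sub>R G x"
        using add[of "(t - q) *\<^sub>R x" "q *\<^sub>R x"] rat[OF q(1)] by (simp add: scaleR_diff_left)
      then have "G (t *\<^sub>R x) - t *\<^sub>R G x = G ((t - q) *\<^sub>R x) - (t - q) *\<^sub>R G x"
        by (simp add: scaleR_diff_left)
      also have "norm \<dots> \<le> \<bar>C\<bar> * (\<bar>t - q\<bar> * norm x) + \<bar>t - q\<bar> * norm (G x)"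
        using norm_triangle_ineq4[of "G ((t - q) *\<^sub>R x)" "(t - q) *\<^sub>R G x"] bound[of "(t - q) *\<^sub>R x"]
        by simp
      also have "\<dots> \<le> \<bar>t - q\<bar> * K" unfolding K_def by (simp add: algebra_simps)
      also have "\<dots> \<le> e" using q(2) K by (simp add: field_simps)
      finally show ?thesis .
    qed
    then have "norm (G (t *\<^sub>R x) - t *\<^sub>R G x) \<le> 0" by (meson dense not_le)
    then show ?thesis by simp
  qed
  then show ?thesis by (intro linearI) (simp_all add: add)
qed

locale plane_norm =
  fixes N :: "real^2 \<Rightarrow> real"
  assumes is_norm: "is_norm N"
begin

lemma N_nonneg: "0 \<le> N x"
  and N_eq_0_iff [simp]: "N x = 0 \<longleftrightarrow> x = 0"
  and N_scaleR: "N (c *\<^sub>R x) = \<bar>c\<bar> * N x"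
  and N_triangle: "N (x + y) \<le> N x + N y"
  using is_norm unfolding is_norm_def by auto

lemma N_0 [simp]: "N 0 = 0"
  by simp

lemma N_pos: "x \<noteq> 0 \<Longrightarrow> 0 < N x"
  using N_nonneg[of x] by (auto simp: less_le)

lemma N_minus [simp]: "N (- x) = N x"
  using N_scaleR[of "-1" x] by simp

lemma N_commute: "N (x - y) = N (y - x)"
  using N_minus[of "x - y"] by simp

lemma N_diff_le: "N (x - y) \<le> N x + N y"
  using N_triangle[of x "- y"] by simp

lemma N_triangle_diff: "N (x - z) \<le> N (x - y) + N (y - z)"
  using N_triangle[of "x - y" "y - z"] by simp

lemma convex_on_N: "convex_on UNIV N"
proof (rule convex_onI)
  fix t :: real and x y :: "real^2"
  assume "0 < t" "t < 1"
  then show "N ((1 - t) *\<^sub>R x + t *\<^sub>R y) \<le> (1 - t) * N x + t * N y"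
    using N_triangle[of "(1 - t) *\<^sub>R x" "t *\<^sub>R y"] by (simp add: N_scaleR)
qed simp

lemma continuous_on_N [continuous_intros]:
  "continuous_on S g \<Longrightarrow> continuous_on S (\<lambda>x. N (g x))"
  using continuous_on_compose2[OF convex_on_continuous[OF open_UNIV convex_on_N]] by blast

lemma N_norm_equivalent:
  obtains m M where "0 < m" "\<And>x. m * norm x \<le> N x" "\<And>x. N x \<le> M * norm x"
proof -
  have sphere: "compact (sphere (0::real^2) 1)" "sphere (0::real^2) 1 \<noteq> {}"
    and cont: "continuous_on (sphere 0 1) N"
    by (simp_all add: continuous_on_N[OF continuous_on_id])
  obtain x0 where x0: "x0 \<in> sphere 0 1" "\<forall>y\<in>sphere 0 1. N x0 \<le> N y"
    using continuous_attains_inf[OF sphere cont] by blast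
  obtain x1 where x1: "\<forall>y\<in>sphere 0 1. N y \<le> N x1"
    using continuous_attains_sup[OF sphere cont] by blast
  have scale: "N x = norm x * N (x /\<^sub>R norm x)" for x
    by (cases "x = 0") (simp_all add: N_scaleR)
  show thesis
  proof
    show "0 < N x0" using x0(1) by (intro N_pos) auto
    show "N x0 * norm x \<le> N x" for x
      using x0(2) scale[of x] by (cases "x = 0") (simp_all add: mult.commute)
    show "N x \<le> N x1 * norm x" for x
      using x1 scale[of x] by (cases "x = 0") (simp_all add: mult.commute)
  qed
qed

definition unit_sphere :: "(real^2) set" where
  "unit_sphere = {x. N x = 1}"

lemma N_normalize: "x \<noteq> 0 \<Longrightarrow> N (x /\<^sub>R N x) = 1"
  using N_pos[of x] by (simp add: N_scaleR)

lemma unit_direction: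
  obtains s where "N s = 1" and "x = N x *\<^sub>R s"
proof (cases "x = 0")
  case True
  have "axis 1 1 \<noteq> (0::real^2)" by (simp add: axis_eq_0_iff)
  then show thesis by (rule that[OF N_normalize]) (simp add: True)
next
  case False
  then show thesis by (rule that[OF N_normalize]) (simp add: False)
qed

lemma bounded_unit_sphere: "bounded unit_sphere"
proof -
  obtain m where m: "0 < m" "\<And>x. m * norm x \<le> N x"
    using N_norm_equivalent by metis
  have "norm x \<le> 1 / m" if "N x = 1" for x
    using m(2)[of x] that m(1) by (simp add: pos_le_divide_eq mult.commute)
  then show ?thesis unfolding bounded_iff unit_sphere_def by (intro exI[of _ "1 / m"]) simp
qed

lemma connected_unit_sphere: "connected unit_sphere"
proof -
  have "unit_sphere = (\<lambda>x. x /\<^sub>R N x) ` sphere 0 1"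
  proof (intro equalityI subsetI)
    fix y assume "y \<in> unit_sphere"
    then have "N y = 1" "y \<noteq> 0" by (auto simp: unit_sphere_def)
    then have "y /\<^sub>R norm y \<in> sphere 0 1" "y = (\<lambda>x. x /\<^sub>R N x) (y /\<^sub>R norm y)"
      by (simp_all add: N_scaleR)
    then show "y \<in> (\<lambda>x. x /\<^sub>R N x) ` sphere 0 1" by blast
  next
    fix y assume "y \<in> (\<lambda>x. x /\<^sub>R N x) ` sphere 0 1"
    then obtain x where "y = x /\<^sub>R N x" "norm x = 1" by auto
    moreover have "0 < N x" using \<open>norm x = 1\<close> by (intro N_pos) auto
    ultimately show "y \<in> unit_sphere" by (simp add: unit_sphere_def N_scaleR del: N_eq_0_iff)
  qed
  moreover have "continuous_on (sphere 0 1) (\<lambda>x::real^2. x /\<^sub>R N x)"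
    by (intro continuous_intros) auto
  moreover have "connected (sphere (0::real^2) 1)" by (rule connected_sphere) simp
  ultimately show ?thesis by (simp add: connected_continuous_image)
qed

text \<open>The intermediate value theorem along the unit sphere: as \<open>s\<close> moves from the
  direction of \<open>q - p\<close> to the opposite one, \<open>N (p + k s - q)\<close> moves from
  \<open>\<bar>k - N (q - p)\<bar>\<close> to \<open>k + N (q - p)\<close>.\<close>
lemma exists_equidistant:
  assumes "0 < k" and "N (q - p) \<le> 2 * k"
  shows "\<exists>z. N (z - p) = k \<and> N (z - q) = k"
proof -
  define r where "r = N (q - p)"
  obtain s0 where s0: "N s0 = 1" "q - p = r *\<^sub>R s0" unfolding r_def by (rule unit_direction)
  define h where "h s = N (p + k *\<^sub>R s - q)" for s
  have r: "0 \<le> r" unfolding r_def by (rule N_nonneg)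
  have "p + k *\<^sub>R s0 - q = (k - r) *\<^sub>R s0" using s0(2) by (simp add: algebra_simps)
  then have h1: "h s0 = \<bar>k - r\<bar>" using s0(1) unfolding h_def by (simp add: N_scaleR)
  have "p + k *\<^sub>R (- s0) - q = (- (k + r)) *\<^sub>R s0" using s0(2) by (simp add: algebra_simps)
  then have h2: "h (- s0) = k + r" using s0(1) r \<open>0 < k\<close> unfolding h_def by (simp add: N_scaleR)
  have "s0 \<in> unit_sphere" "- s0 \<in> unit_sphere"
    using s0 by (simp_all add: unit_sphere_def)
  then have "\<bar>k - r\<bar> \<in> h ` unit_sphere" "k + r \<in> h ` unit_sphere"
    unfolding h1[symmetric] h2[symmetric] by simp_all
  then have "{\<bar>k - r\<bar>..k + r} \<subseteq> h ` unit_sphere"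
    unfolding h_def by (intro connected_contains_Icc connected_continuous_image connected_unit_sphere
        continuous_intros)
  moreover have "\<bar>k - r\<bar> \<le> k" "k \<le> k + r"
    using assms r unfolding r_def by auto
  ultimately have "k \<in> h ` unit_sphere" by auto
  then obtain s where "N s = 1" "h s = k" by (auto simp: unit_sphere_def)
  then show ?thesis using \<open>0 < k\<close> unfolding h_def
    by (intro exI[of _ "p + k *\<^sub>R s"]) (simp add: N_scaleR)
qed

lemma unit_sum_decomposition:
  assumes "N v \<le> 2"
  obtains u1 u2 where "N u1 = 1" "N u2 = 1" "v = u1 + u2"
proof -
  obtain z where "N (z - 0) = 1" "N (z - v) = 1" using exists_equidistant[of 1 v 0] assms by auto
  then show thesis using that[of z "v - z"] by (simp add: N_commute)
qed

end

definition det2 :: "real^2 \<Rightarrow> real^2 \<Rightarrow> real" where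
  "det2 a b = a$1 * b$2 - a$2 * b$1"

lemma det2_swap: "det2 b a = - det2 a b"
  and det2_diff_right: "det2 a (a - b) = - det2 a b"
  and det2_minus: "det2 (- a) (- b) = det2 a b"
  by (simp_all add: det2_def algebra_simps)

lemma continuous_on_det2 [continuous_intros]:
  "continuous_on S f \<Longrightarrow> continuous_on S g \<Longrightarrow> continuous_on S (\<lambda>x. det2 (f x) (g x))"
  unfolding det2_def by (intro continuous_intros)

lemma det2_eq_0_imp_parallel:
  assumes "det2 a b = 0" and "a \<noteq> 0"
  obtains t where "b = t *\<^sub>R a"
proof (cases "a$1 = 0")
  case True
  then have "a$2 \<noteq> 0" using assms(2) by (metis exhaust_2 vec_eq_iff zero_index)
  moreover have "b$1 = 0" using assms(1) True \<open>a$2 \<noteq> 0\<close> by (simp add: det2_def)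
  ultimately have "b = (b$2 / a$2) *\<^sub>R a" using True by (simp add: vec_eq_iff forall_2)
  then show thesis by (rule that)
next
  case False
  have "b$2 = b$1 / a$1 * a$2"
    using assms(1) False by (simp add: det2_def field_simps)
  then have "b = (b$1 / a$1) *\<^sub>R a" using False by (simp add: vec_eq_iff forall_2)
  then show thesis by (rule that)
qed

locale urtc_plane = plane_norm +
  assumes urtc: "urtc_norm N"
begin

lemma apexes_card_2:
  assumes "N (A - B) = 1"
  shows "finite {x. N (A - x) = 1 \<and> N (B - x) = 1}" "card {x. N (A - x) = 1 \<and> N (B - x) = 1} = 2"
  using urtc assms unfolding urtc_norm_def by blast+

text \<open>The two apexes of a unit triangle over a unit segment are point reflections of each
  other through its midpoint, so by the URTC property there are no others.\<close>
lemma second_apex: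
  assumes "N (A - B) = 1"
    and "N (A - X) = 1" "N (B - X) = 1"
    and "N (A - Y) = 1" "N (B - Y) = 1"
    and "X \<noteq> Y"
  shows "Y = A + B - X"
proof -
  define T where "T = {x. N (A - x) = 1 \<and> N (B - x) = 1}"
  have "finite T" "card T = 2" unfolding T_def using apexes_card_2[OF assms(1)] by simp_all
  have sub: "{X, A + B - X} \<subseteq> T" using assms(2,3) unfolding T_def by (simp add: N_commute[of X])
  have "X \<noteq> A + B - X"
  proof
    assume "X = A + B - X"
    then have "X + X = A + B" by (metis diff_add_cancel)
    then have "A - B = 2 *\<^sub>R (A - X)" by (simp add: scaleR_2 algebra_simps)
    then show False using assms(1,2) by (simp add: N_scaleR)
  qed
  then have "card {X, A + B - X} = 2" by simp
  then have "T = {X, A + B - X}"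
    using card_subset_eq[OF \<open>finite T\<close> sub] \<open>card T = 2\<close> by simp
  moreover have "Y \<in> T" using assms(4,5) unfolding T_def by simp
  ultimately show ?thesis using assms(6) by auto
qed

definition unit_triangle :: "real^2 \<Rightarrow> real^2 \<Rightarrow> bool" where
  "unit_triangle a b \<longleftrightarrow> N a = 1 \<and> N b = 1 \<and> N (a - b) = 1"

lemma unit_triangle_commute: "unit_triangle a b \<Longrightarrow> unit_triangle b a"
  and unit_triangle_diff_right: "unit_triangle a b \<Longrightarrow> unit_triangle a (a - b)"
  and unit_triangle_minus: "unit_triangle a b \<Longrightarrow> unit_triangle (- a) (- b)"
  unfolding unit_triangle_def by (auto simp: N_commute[of a])

lemma unit_triangle_exists: "N a = 1 \<Longrightarrow> \<exists>b. unit_triangle a b"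
proof -
  assume "N a = 1"
  then have "card {x. N (a - x) = 1 \<and> N (0 - x) = 1} = 2"
    using apexes_card_2(2)[of a 0] by simp
  then have "{x. N (a - x) = 1 \<and> N (0 - x) = 1} \<noteq> {}" by (metis card.empty zero_neq_numeral)
  then obtain b where "N (a - b) = 1" "N (0 - b) = 1" by blast
  with \<open>N a = 1\<close> show ?thesis unfolding unit_triangle_def by auto
qed

lemma unit_triangle_unique:
  assumes "unit_triangle a b" "unit_triangle a c" "b \<noteq> c"
  shows "c = a - b"
  using second_apex[of a 0 b c] assms unfolding unit_triangle_def by simp

lemma unit_triangle_sum_not_unit:
  assumes "unit_triangle a b"
  shows "N (a + b) \<noteq> 1"
proof
  assume "N (a + b) = 1"
  with assms have "unit_triangle a (a + b)" unfolding unit_triangle_def by simp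
  moreover have "b \<noteq> a + b" using assms unfolding unit_triangle_def by auto
  ultimately have "a + b = a - b" using unit_triangle_unique assms by blast
  moreover have "(a + b) - (a - b) = 2 *\<^sub>R b" by (simp add: scaleR_2)
  ultimately have "b = 0" by simp
  then show False using assms unfolding unit_triangle_def by simp
qed

lemma unit_triangle_sum_ge_1:
  assumes "unit_triangle a b"
  shows "1 \<le> N (a + b)"
proof -
  have "2 = N (2 *\<^sub>R a)" using assms unfolding unit_triangle_def by (simp add: N_scaleR)
  also have "\<dots> = N ((a + b) + (a - b))" by (simp add: scaleR_2)
  also have "\<dots> \<le> N (a + b) + N (a - b)" by (rule N_triangle)
  finally show ?thesis using assms unfolding unit_triangle_def by simp
qed

definition pos_unit_triangles :: "((real^2) \<times> (real^2)) set" where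
  "pos_unit_triangles = {(a, b). unit_triangle a b \<and> 0 \<le> det2 a b}"

lemma compact_pos_unit_triangles: "compact pos_unit_triangles"
proof -
  have "pos_unit_triangles \<subseteq> unit_sphere \<times> unit_sphere"
    unfolding pos_unit_triangles_def unit_triangle_def unit_sphere_def by auto
  then have "bounded pos_unit_triangles"
    using bounded_Times[OF bounded_unit_sphere bounded_unit_sphere] bounded_subset by blast
  moreover have "closed pos_unit_triangles"
    unfolding pos_unit_triangles_def unit_triangle_def case_prod_unfold
    by (intro closed_Collect_conj closed_Collect_eq closed_Collect_le continuous_intros)
  ultimately show ?thesis by (simp add: compact_eq_bounded_closed)
qed

text \<open>The two unit triangles on a unit vector \<open>a\<close> are \<open>(a, b)\<close> and \<open>(a, a - b)\<close>, of
  opposite orientation; both being positively oriented would make \<open>b\<close> parallel to \<open>a\<close>.\<close>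
lemma inj_on_fst_pos_unit_triangles: "inj_on fst pos_unit_triangles"
proof (rule inj_onI, clarsimp)
  fix a b c
  assume ab: "(a, b) \<in> pos_unit_triangles" and ac: "(a, c) \<in> pos_unit_triangles"
  show "b = c"
  proof (rule ccontr)
    assume "b \<noteq> c"
    with ab ac have "c = a - b"
      using unit_triangle_unique unfolding pos_unit_triangles_def by blast
    then have "det2 a b = 0" using ab ac det2_diff_right[of a b]
      unfolding pos_unit_triangles_def by simp
    moreover have "a \<noteq> 0" using ab unfolding pos_unit_triangles_def unit_triangle_def by auto
    ultimately obtain t where t: "b = t *\<^sub>R a" by (rule det2_eq_0_imp_parallel)
    then have "a - b = (1 - t) *\<^sub>R a" by (simp add: algebra_simps)
    with t ab have "\<bar>t\<bar> = 1" "\<bar>1 - t\<bar> = 1"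
      unfolding pos_unit_triangles_def unit_triangle_def by (auto simp: N_scaleR)
    then show False by linarith
  qed
qed

lemma fst_image_pos_unit_triangles: "fst ` pos_unit_triangles = unit_sphere"
proof (intro equalityI subsetI)
  fix a assume "a \<in> unit_sphere"
  then obtain b where b: "unit_triangle a b"
    using unit_triangle_exists unfolding unit_sphere_def by blast
  then have "(a, b) \<in> pos_unit_triangles \<or> (a, a - b) \<in> pos_unit_triangles"
    using unit_triangle_diff_right[OF b] det2_diff_right[of a b]
    unfolding pos_unit_triangles_def by auto
  then show "a \<in> fst ` pos_unit_triangles" by force
qed (auto simp: pos_unit_triangles_def unit_triangle_def unit_sphere_def)

lemma connected_pos_unit_triangles: "connected pos_unit_triangles"
proof -
  obtain g where "homeomorphism pos_unit_triangles unit_sphere fst g"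
    using homeomorphism_compact[OF compact_pos_unit_triangles continuous_on_fst[OF continuous_on_id]
        fst_image_pos_unit_triangles inj_on_fst_pos_unit_triangles] by blast
  then have "continuous_on unit_sphere g" "g ` unit_sphere = pos_unit_triangles"
    unfolding homeomorphism_def by auto
  then show ?thesis using connected_continuous_image connected_unit_sphere by metis
qed

text \<open>Along the connected set of positively oriented unit triangles, \<open>N (a' + b' - w)\<close>
  takes the value 0 at (one orientation of) the given triangle and \<open>2 N w \<ge> 2\<close> at its
  negative.\<close>
lemma unit_triangle_sum_moves:
  assumes "unit_triangle a b"
  obtains a' b' where "unit_triangle a' b'" "N (a' + b' - (a + b)) = 1"
proof -
  define w where "w = a + b"
  obtain a0 b0 where ab0: "(a0, b0) \<in> pos_unit_triangles" "a0 + b0 = w"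
  proof (cases "0 \<le> det2 a b")
    case True
    then show thesis using assms by (intro that[of a b]) (simp_all add: pos_unit_triangles_def w_def)
  next
    case False
    then show thesis using unit_triangle_commute[OF assms] det2_swap[of a b]
      by (intro that[of b a]) (simp_all add: pos_unit_triangles_def w_def add.commute)
  qed
  then have "(- a0, - b0) \<in> pos_unit_triangles"
    unfolding pos_unit_triangles_def by (auto simp: det2_minus unit_triangle_minus)
  define k where "k p = N (fst p + snd p - w)" for p :: "(real^2) \<times> (real^2)"
  have "k (a0, b0) = 0" unfolding k_def using ab0 by simp
  moreover have "- a0 + - b0 - w = (-2) *\<^sub>R w" using ab0(2) by (simp add: algebra_simps scaleR_2)
  then have "k (- a0, - b0) = 2 * N w" unfolding k_def by (simp add: N_scaleR)
  ultimately have "0 \<in> k ` pos_unit_triangles" "2 * N w \<in> k ` pos_unit_triangles"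
    using ab0(1) \<open>(- a0, - b0) \<in> pos_unit_triangles\<close> by (metis image_eqI)+
  then have "{0 .. 2 * N w} \<subseteq> k ` pos_unit_triangles"
    unfolding k_def by (intro connected_contains_Icc connected_continuous_image
        connected_pos_unit_triangles continuous_intros)
  moreover have "1 \<le> N w" unfolding w_def by (rule unit_triangle_sum_ge_1[OF assms])
  ultimately have "1 \<in> k ` pos_unit_triangles" by auto
  then show thesis using that unfolding k_def w_def pos_unit_triangles_def by auto
qed

end

locale unit_preserving_map = urtc_plane +
  fixes f :: "real^2 \<Rightarrow> real^2"
  assumes preserves_unit: "N (x - y) = 1 \<Longrightarrow> N (f x - f y) = 1"
begin

lemma preserves_unit_step: "N u = 1 \<Longrightarrow> N (f (p + u) - f p) = 1"
  by (rule preserves_unit) simp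

lemma image_unit_triangle:
  assumes "unit_triangle a b"
  shows "unit_triangle (f (p + a) - f p) (f (p + b) - f p)"
proof -
  have "N ((p + a) - (p + b)) = 1" using assms unfolding unit_triangle_def by simp
  then have "N (f (p + a) - f (p + b)) = 1" by (rule preserves_unit)
  then show ?thesis using assms unfolding unit_triangle_def by (simp add: preserves_unit_step)
qed

lemma rhombus_cases:
  assumes "unit_triangle a b"
  shows "f (p + a + b) = f p \<or> f (p + a + b) = f (p + a) + f (p + b) - f p"
proof (cases "f (p + a + b) = f p")
  case False
  have "N ((p + a) - (p + a + b)) = 1" "N ((p + b) - (p + a + b)) = 1"
    using assms unfolding unit_triangle_def by (simp_all add: algebra_simps)
  then have "N (f (p + a) - f (p + a + b)) = 1" "N (f (p + b) - f (p + a + b)) = 1"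
    by (simp_all add: preserves_unit)
  moreover have "N (f (p + a) - f (p + b)) = 1" "N (f (p + a) - f p) = 1" "N (f (p + b) - f p) = 1"
    using image_unit_triangle[OF assms, of p] unfolding unit_triangle_def by simp_all
  ultimately show ?thesis using second_apex not_sym[OF False] by blast
qed simp

text \<open>If the rhombus collapsed, move \<open>a + b\<close> by a unit vector to \<open>a' + b'\<close>: then
  \<open>f (p + a' + b')\<close> has unit distance from \<open>f p\<close>, which is impossible whether the
  rhombus on \<open>a', b'\<close> collapses or not.\<close>
lemma rhombus_nondegenerate:
  assumes "unit_triangle a b"
  shows "f (p + a + b) \<noteq> f p"
proof
  assume collapse: "f (p + a + b) = f p"
  obtain a' b' where ab': "unit_triangle a' b'" "N (a' + b' - (a + b)) = 1"
    using unit_triangle_sum_moves[OF assms] by blast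
  have "N ((p + a' + b') - (p + a + b)) = 1" using ab'(2) by (simp add: algebra_simps)
  then have far: "N (f (p + a' + b') - f p) = 1" unfolding collapse[symmetric] by (rule preserves_unit)
  then have "f (p + a' + b') \<noteq> f p" by auto
  then have "f (p + a' + b') - f p = (f (p + a') - f p) + (f (p + b') - f p)"
    using rhombus_cases[OF ab'(1), of p] by auto
  with far have "N ((f (p + a') - f p) + (f (p + b') - f p)) = 1" by simp
  with unit_triangle_sum_not_unit image_unit_triangle[OF ab'(1)] show False by blast
qed

lemma rhombus:
  assumes "unit_triangle a b"
  shows "f (p + a + b) = f (p + a) + f (p + b) - f p"
  using rhombus_cases[OF assms] rhombus_nondegenerate[OF assms] by blast

text \<open>Two rhombi sharing the side \<open>[p + b, p + a]\<close>.\<close>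
lemma unit_second_difference:
  assumes "N a = 1"
  shows "f (p + 2 *\<^sub>R a) = 2 *\<^sub>R f (p + a) - f p"
proof -
  obtain b where b: "unit_triangle a b" using unit_triangle_exists[OF assms] by blast
  have "f (p + 2 *\<^sub>R a) = f ((p + b) + a + (a - b))" by (simp add: algebra_simps scaleR_2)
  also have "\<dots> = f (p + a + b) + f (p + a) - f (p + b)"
    using rhombus[OF unit_triangle_diff_right[OF b], of "p + b"] by (simp add: algebra_simps)
  also have "\<dots> = 2 *\<^sub>R f (p + a) - f p"
    using rhombus[OF b, of p] by (simp add: algebra_simps scaleR_2)
  finally show ?thesis .
qed

lemma unit_progression:
  assumes "N a = 1"
  shows "f (p + real n *\<^sub>R a) = f p + real n *\<^sub>R (f (p + a) - f p)"
proof -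
  let ?x = "\<lambda>k. f (p + real k *\<^sub>R a)"
  have "?x (Suc (Suc k)) = 2 *\<^sub>R ?x (Suc k) - ?x k" for k
    using unit_second_difference[OF assms, of "p + real k *\<^sub>R a"] by (simp add: algebra_simps)
  then have "?x n = ?x 0 + real n *\<^sub>R (?x 1 - ?x 0)"
    by (rule arithmetic_progression_of_second_difference)
  then show ?thesis by simp
qed

lemma coarse_lipschitz: "N (f p - f q) \<le> 2 * N (p - q) + 4"
proof -
  define m where "m = nat \<lceil>N (q - p)\<rceil> + 1"
  have m: "N (q - p) \<le> real m" "1 \<le> real m" "real m \<le> N (q - p) + 2"
    unfolding m_def using N_nonneg[of "q - p"] by linarith+
  obtain z where z: "N (z - p) = real m" "N (z - q) = real m"
    using exists_equidistant[of "real m" q p] m by auto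
  have "N (f z - f x) = real m" if "N (z - x) = real m" for x
  proof -
    obtain s where s: "N s = 1" "z - x = N (z - x) *\<^sub>R s" by (rule unit_direction)
    then have "z = x + real m *\<^sub>R s" using that by (simp add: algebra_simps)
    then show ?thesis
      using unit_progression[OF s(1), of x m] preserves_unit_step[OF s(1), of x] by (simp add: N_scaleR)
  qed
  then have "N (f p - f z) = real m" "N (f z - f q) = real m" using z N_commute by metis+
  then have "N (f p - f q) \<le> 2 * real m" using N_triangle_diff[of "f p" "f q" "f z"] by simp
  also have "\<dots> \<le> 2 * N (p - q) + 4" using m N_commute[of p q] by simp
  finally show ?thesis .
qed

text \<open>The increments along a unit vector differ by a constant \<open>d\<close> along parallel lines, so
  a nonzero \<open>d\<close> would contradict the coarse Lipschitz bound.\<close>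
lemma unit_increment_const:
  assumes "N u = 1"
  shows "f (x + u) - f x = f (y + u) - f y"
proof -
  define d where "d = (f (x + u) - f x) - (f (y + u) - f y)"
  have "real n * N d \<le> real n * 0 + (2 * N (x - y) + 4 + N (f x - f y))" for n
  proof -
    have "real n *\<^sub>R d = (f (x + real n *\<^sub>R u) - f (y + real n *\<^sub>R u)) - (f x - f y)"
      unfolding d_def unit_progression[OF assms] by (simp add: algebra_simps)
    then have "N (real n *\<^sub>R d) \<le> N (f (x + real n *\<^sub>R u) - f (y + real n *\<^sub>R u)) + N (f x - f y)"
      by (simp only: N_diff_le)
    also have "\<dots> \<le> 2 * N (x - y) + 4 + N (f x - f y)"
      using coarse_lipschitz[of "x + real n *\<^sub>R u" "y + real n *\<^sub>R u"] by simp
    finally show ?thesis by (simp add: N_scaleR)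
  qed
  then have "N d \<le> 0" by (rule le_of_forall_nat_mult_le)
  then have "d = 0" using N_nonneg[of d] by simp
  then show ?thesis unfolding d_def by simp
qed

definition linear_part :: "real^2 \<Rightarrow> real^2" where
  "linear_part w = f w - f 0"

lemma f_add_unit_multiple:
  assumes "N u = 1"
  shows "f (x + real n *\<^sub>R u) = f x + real n *\<^sub>R linear_part u"
  using unit_progression[OF assms, of x n] unit_increment_const[OF assms, of x 0]
  unfolding linear_part_def by simp

text \<open>Write \<open>w\<close> as \<open>n (u\<^sub>1 + u\<^sub>2)\<close> with unit vectors \<open>u\<^sub>i\<close> and walk
  along both directions.\<close>
lemma f_add_linear_part: "f (x + w) = f x + linear_part w"
proof -
  define n where "n = nat \<lceil>N w\<rceil> + 1"
  have n: "N w \<le> real n" "0 < real n" unfolding n_def using N_nonneg[of w] by linarith+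
  then have "N (w /\<^sub>R real n) \<le> 1" by (simp add: N_scaleR inverse_eq_divide divide_le_eq_1)
  then obtain u1 u2 where u: "N u1 = 1" "N u2 = 1" "w /\<^sub>R real n = u1 + u2"
    using unit_sum_decomposition by (metis one_le_numeral order_trans)
  have "w = real n *\<^sub>R (w /\<^sub>R real n)" using n(2) by simp
  then have w: "w = real n *\<^sub>R u1 + real n *\<^sub>R u2" unfolding u(3) scaleR_add_right .
  have "f (y + w) = f y + real n *\<^sub>R linear_part u1 + real n *\<^sub>R linear_part u2" for y
    unfolding w add.assoc[symmetric] f_add_unit_multiple[OF u(2)] f_add_unit_multiple[OF u(1)] ..
  from this[of x] this[of 0] show ?thesis unfolding linear_part_def by simp
qed

lemma linear_part_add: "linear_part (v + w) = linear_part v + linear_part w"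
  using f_add_linear_part[of v w] unfolding linear_part_def by simp

lemma linear_linear_part: "linear linear_part"
proof -
  obtain m M where m: "0 < m" "\<And>x. m * norm x \<le> N x" "\<And>x. N x \<le> M * norm x"
    using N_norm_equivalent by metis
  have "norm (linear_part x) \<le> (2 * M / m) * norm x + 4 / m" for x
  proof -
    have "m * norm (linear_part x) \<le> N (linear_part x)" by (rule m(2))
    also have "\<dots> \<le> 2 * N x + 4" using coarse_lipschitz[of x 0] unfolding linear_part_def by simp
    also have "\<dots> \<le> 2 * (M * norm x) + 4" using m(3)[of x] by simp
    finally show ?thesis using m(1) by (simp add: field_simps)
  qed
  with linear_part_add show ?thesis by (rule additive_coarsely_bounded_imp_linear)
qed

lemma N_linear_part: "N (linear_part v) = N v"
proof -
  obtain s where s: "N s = 1" "v = N v *\<^sub>R s" by (rule unit_direction)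
  have "N (linear_part s) = 1" using preserves_unit_step[OF s(1), of 0] unfolding linear_part_def by simp
  moreover have "linear_part v = N v *\<^sub>R linear_part s"
    by (subst s(2)) (rule linear_scale[OF linear_linear_part])
  ultimately show ?thesis using N_nonneg[of v] by (simp add: N_scaleR)
qed

lemma affine_isometry_f: "affine_isometry N f"
  unfolding affine_isometry_def
proof (intro conjI exI allI)
  show "linear linear_part" by (rule linear_linear_part)
  show "f x = linear_part x + f 0" for x unfolding linear_part_def by simp
  show "N (f x - f y) = N (x - y)" for x y
    using f_add_linear_part[of y "x - y"] N_linear_part[of "x - y"] by simp
qed

end

theorem theorem1:
  fixes N :: "real^2 \<Rightarrow> real" and \<phi> :: "real^2 \<Rightarrow> real^2"
  assumes "urtc_norm N"
    and "\<And>x y. N (x - y) = 1 \<Longrightarrow> N (\<phi> x - \<phi> y) = 1"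
  shows "affine_isometry N \<phi>"
proof -
  interpret unit_preserving_map N \<phi>
    using assms by unfold_locales (auto simp: urtc_norm_def)
  show ?thesis by (rule affine_isometry_f)
qed

end
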